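(* Let $\mathbf{H}_1,\ldots,\mathbf{H}_Q$ be full-column-rank matrices with $\mathbf{H}_q\in\mathbb{R}^{N\times K_q}$, and let $\pi_1,\ldots,\pi_Q\ge0$ with $\sum_q\pi_q=1$. Let $\mathbf{H}_{\mathrm{eq}}=\sum_{q=1}^Q\pi_q\mathbf{H}_q\mathbf{H}_q^T$, with orthonormal eigenvectors $\mathbf{e}_1,\ldots,\mathbf{e}_N$ and corresponding eigenvalues $\mu_1\ge\cdots\ge\mu_N$. Let $M_1,M_2$ be positive integers with $M=M_1+M_2\le N$. Under the model in the context, $\boldsymbol{\Phi}_s=\frac{1}{\sqrt M}[\mathbf{e}_1,\ldots,\mathbf{e}_{M_1}]^T$ maximizes $\mathbb{E}_{\mathbf{H},\mathbf{x},\mathbf{w}}(\mathbf{z}_s^T\mathbf{z}_s)$ over all $\boldsymbol{\Phi}_s\in\mathbb{R}^{M_1\times N}$ with $M\boldsymbol{\Phi}_s\boldsymbol{\Phi}_s^T=\mathbf{I}_{M_1}$, and $\boldsymbol{\Phi}_o=\frac{1}{\sqrt M}[\mathbf{e}_{N-M_2+1},\ldots,\mathbf{e}_N]^T$ minimizes $\mathbb{E}_{\mathbf{H},\mathbf{x},\mathbf{w}}(\mathbf{z}_o^T\mathbf{z}_o)$ over all $\boldsymbol{\Phi}_o\in\mathbb{R}^{M_2\times N}$ with $M\boldsymbol{\Phi}_o\boldsymbol{\Phi}_o^T=\mathbf{I}_{M_2}$.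
   Context: The subspace matrix $\mathbf{H}$ is random with $\Pr(\mathbf{H}=\mathbf{H}_q)=\pi_q$. Given $\mathbf{H}=\mathbf{H}_q$, the signal is $\mathbf{s}=\mathbf{H}_q\mathbf{x}$ with $\mathbf{x}\sim\mathcal{N}(\mathbf{0}_{K_q,1},\sigma_x^2\mathbf{I}_{K_q})$. Rows $\boldsymbol{\phi}_m^T$ of a measurement matrix represent measurement devices; device $m$ outputs $z_m=\boldsymbol{\phi}_m^T(\mathbf{s}+\mathbf{w}_m)$, with $\mathbf{w}_m\sim\mathcal{N}(\mathbf{0}_{N,1},\sigma_0^2\mathbf{I}_N)$ mutually independent and independent of $\mathbf{x}$ and $\mathbf{H}$. $\mathbf{z}_s$ (resp. $\mathbf{z}_o$) is the vector of outputs of the devices given by the rows of $\boldsymbol{\Phi}_s$ (resp. $\boldsymbol{\Phi}_o$). Expectation is over $\mathbf{H}$, $\mathbf{x}$ and the noise. *)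

theory Defs
  imports "HOL-Probability.Probability" "Jordan_Normal_Form.Matrix" "Jordan_Normal_Form.DL_Rank"
begin

definition full_col_rank :: "real mat \<Rightarrow> bool" where
  "full_col_rank A \<longleftrightarrow> vec_space.rank (dim_row A) A = dim_col A"

definition gauss :: "real \<Rightarrow> real measure" where
  "gauss \<sigma> = density lborel (normal_density 0 \<sigma>)"

definition x_law :: "real \<Rightarrow> nat \<Rightarrow> (nat \<Rightarrow> real) measure" where
  "x_law \<sigma>x K = PiM {..<K} (\<lambda>_. gauss \<sigma>x)"

text \<open>Law of the noise of the devices: w (m,n) is the n-th entry of w_m,
  all i.i.d. N(0,sigma_0^2), for m < number of devices, n < N.\<close>
definition w_law :: "real \<Rightarrow> nat \<Rightarrow> nat \<Rightarrow> (nat \<times> nat \<Rightarrow> real) measure" where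
  "w_law \<sigma>0 Mr N = PiM ({..<Mr} \<times> {..<N}) (\<lambda>_. gauss \<sigma>0)"

text \<open>Output energy z^T z of the devices given by the rows of Phi, for a realisation
  H = H_q, x, noise w: z_m = phi_m^T (H_q x + w_m).\<close>
definition out_energy :: "real mat \<Rightarrow> real mat \<Rightarrow> nat \<Rightarrow> (nat \<Rightarrow> real) \<Rightarrow> (nat \<times> nat \<Rightarrow> real) \<Rightarrow> real" where
  "out_energy \<Phi> Hq N x w =
     (\<Sum>m<dim_row \<Phi>. (row \<Phi> m \<bullet> (Hq *\<^sub>v vec (dim_col Hq) x + vec N (\<lambda>n. w (m, n))))\<^sup>2)"

text \<open>Expectation E_{H,x,w}(z^T z): H = H q with probability pi q (q < Q), then x and
  the noise are independent Gaussians as in the model.\<close>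
definition expected_energy ::
  "real \<Rightarrow> real \<Rightarrow> nat \<Rightarrow> (nat \<Rightarrow> real) \<Rightarrow> (nat \<Rightarrow> real mat) \<Rightarrow> nat \<Rightarrow> real mat \<Rightarrow> real" where
  "expected_energy \<sigma>x \<sigma>0 Q \<pi> H N \<Phi> =
     (\<Sum>q<Q. \<pi> q * (\<integral>x. (\<integral>w. out_energy \<Phi> (H q) N x w \<partial>w_law \<sigma>0 (dim_row \<Phi>) N)
                        \<partial>x_law \<sigma>x (dim_col (H q))))"

end

theory Submission
  imports Defs
begin

text \<open>Integrating out the Gaussian signal and noise, the expected output energy of a
  measurement matrix \<open>\<Phi>\<close> is \<open>\<sigma>x\<^sup>2 tr(\<Phi> Heq \<Phi>\<^sup>T) + \<sigma>0\<^sup>2 tr(\<Phi> \<Phi>\<^sup>T)\<close>. Under the constraint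
  \<open>M \<Phi> \<Phi>\<^sup>T = I\<close> the noise term is the constant \<open>\<sigma>0\<^sup>2 R / M\<close>, and in the eigenbasis of \<open>Heq\<close> the
  signal term is \<open>\<sigma>x\<^sup>2 \<Sum>\<^sub>l \<mu>\<^sub>l d\<^sub>l\<close> with \<open>d\<^sub>l = \<parallel>\<Phi> e\<^sub>l\<parallel>\<^sup>2\<close>. By Bessel's inequality \<open>0 \<le> d\<^sub>l \<le> 1/M\<close>, and
  by Parseval \<open>\<Sum>\<^sub>l d\<^sub>l = R/M\<close>. A linear functional of such weights is largest when the weight
  \<open>1/M\<close> sits on the \<open>R\<close> largest eigenvalues and smallest when it sits on the \<open>R\<close> smallest
  ones, and the eigenvector designs realise exactly these weights.\<close>

section \<open>Moments of independent Gaussians\<close>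

lemma prob_space_gauss: "\<sigma> > 0 \<Longrightarrow> prob_space (gauss \<sigma>)"
  unfolding gauss_def by (rule prob_space_normal_density)

lemma gauss_first_moment:
  assumes "\<sigma> > 0"
  shows "integrable (gauss \<sigma>) (\<lambda>t. t)" and "(\<integral>t. t \<partial>gauss \<sigma>) = 0"
  unfolding gauss_def
  by (subst integrable_density integral_density;
      simp add: integrable_normal_moment_nz_1[OF assms] integral_normal_moment_nz_1[OF assms])+

lemma gauss_second_moment:
  assumes "\<sigma> > 0"
  shows "integrable (gauss \<sigma>) (\<lambda>t. t * t)" and "(\<integral>t. t * t \<partial>gauss \<sigma>) = \<sigma>\<^sup>2"
proof -
  have "has_bochner_integral lborel (\<lambda>x. normal_density 0 \<sigma> x * (x - 0) ^ (2 * 1))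
          (fact (2 * 1) / ((2 / \<sigma>\<^sup>2) ^ 1 * fact 1))"
    by (rule normal_moment_even[OF assms])
  then have moment: "has_bochner_integral lborel (\<lambda>x. normal_density 0 \<sigma> x * (x * x)) (\<sigma>\<^sup>2)"
    using assms by (simp add: power2_eq_square fact_numeral)
  show "integrable (gauss \<sigma>) (\<lambda>t. t * t)" unfolding gauss_def
    by (subst integrable_density) (auto intro: integrable.intros[OF moment])
  show "(\<integral>t. t * t \<partial>gauss \<sigma>) = \<sigma>\<^sup>2" unfolding gauss_def
    by (subst integral_density) (use moment in \<open>auto dest: has_bochner_integral_integral_eq\<close>)
qed

abbreviation iid_gauss :: "'i set \<Rightarrow> real \<Rightarrow> ('i \<Rightarrow> real) measure" where
  "iid_gauss I \<sigma> \<equiv> PiM I (\<lambda>_. gauss \<sigma>)"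

lemma prob_space_iid_gauss: "\<sigma> > 0 \<Longrightarrow> prob_space (iid_gauss I \<sigma>)"
  by (intro prob_space_PiM prob_space_gauss)

lemma product_sigma_finite_gauss: "\<sigma> > 0 \<Longrightarrow> product_sigma_finite (\<lambda>_. gauss \<sigma>)"
  by (simp add: product_sigma_finite_def prob_space_gauss prob_space_imp_sigma_finite)

text \<open>By Fubini, with the factor \<open>1\<close> at every other coordinate, a moment of finitely many
  coordinates is a product of one-dimensional moments.\<close>

lemma iid_gauss_coordinate_mean:
  assumes "finite I" "a \<in> I" "\<sigma> > 0"
  shows "integrable (iid_gauss I \<sigma>) (\<lambda>x. x a)" and "(\<integral>x. x a \<partial>iid_gauss I \<sigma>) = 0"
proof -
  interpret product_sigma_finite "\<lambda>_. gauss \<sigma>" by (rule product_sigma_finite_gauss[OF assms(3)])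
  interpret G: prob_space "gauss \<sigma>" by (rule prob_space_gauss[OF assms(3)])
  define f where "f i t = (if i = a then t else (1::real))" for i t
  have f_integrable: "integrable (gauss \<sigma>) (f i)" for i
    using gauss_first_moment[OF assms(3)] by (cases "i = a") (simp_all add: f_def[abs_def])
  have prod_f: "(\<lambda>x. \<Prod>i\<in>I. f i (x i)) = (\<lambda>x. x a)"
    using assms by (auto simp: f_def fun_eq_iff)
  show "integrable (iid_gauss I \<sigma>) (\<lambda>x. x a)"
    using product_integrable_prod[OF assms(1), of f] f_integrable unfolding prod_f by blast
  have "(\<integral>x. (\<Prod>i\<in>I. f i (x i)) \<partial>iid_gauss I \<sigma>) = (\<Prod>i\<in>I. integral\<^sup>L (gauss \<sigma>) (f i))"
    by (rule product_integral_prod[OF assms(1) f_integrable])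
  also have "\<dots> = 0"
    using assms gauss_first_moment[OF assms(3)]
    by (auto simp: f_def[abs_def] intro!: bexI[of _ a])
  finally show "(\<integral>x. x a \<partial>iid_gauss I \<sigma>) = 0" unfolding prod_f .
qed

lemma iid_gauss_coordinate_covariance:
  assumes "finite I" "a \<in> I" "b \<in> I" "\<sigma> > 0"
  shows "integrable (iid_gauss I \<sigma>) (\<lambda>x. x a * x b)"
    and "(\<integral>x. x a * x b \<partial>iid_gauss I \<sigma>) = (if a = b then \<sigma>\<^sup>2 else 0)"
proof -
  interpret product_sigma_finite "\<lambda>_. gauss \<sigma>" by (rule product_sigma_finite_gauss[OF assms(4)])
  interpret G: prob_space "gauss \<sigma>" by (rule prob_space_gauss[OF assms(4)])
  define f where
    "f i t = (if i = a \<and> i = b then t * t else if i = a \<or> i = b then t else (1::real))" for i t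
  have f_integrable: "integrable (gauss \<sigma>) (f i)" for i
    using gauss_first_moment[OF assms(4)] gauss_second_moment[OF assms(4)]
    by (cases "i = a"; cases "i = b") (simp_all add: f_def[abs_def])
  have prod_f: "(\<lambda>x. \<Prod>i\<in>I. f i (x i)) = (\<lambda>x. x a * x b)"
  proof
    fix x
    have "(\<Prod>i\<in>I. f i (x i)) = (\<Prod>i\<in>I. (if i = a then x i else 1) * (if i = b then x i else 1))"
      by (intro prod.cong) (auto simp: f_def)
    also have "\<dots> = x a * x b"
      using assms by (simp add: prod.distrib)
    finally show "(\<Prod>i\<in>I. f i (x i)) = x a * x b" .
  qed
  show "integrable (iid_gauss I \<sigma>) (\<lambda>x. x a * x b)"
    using product_integrable_prod[OF assms(1), of f] f_integrable unfolding prod_f by blast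
  have "(\<integral>x. (\<Prod>i\<in>I. f i (x i)) \<partial>iid_gauss I \<sigma>) = (\<Prod>i\<in>I. integral\<^sup>L (gauss \<sigma>) (f i))"
    by (rule product_integral_prod[OF assms(1) f_integrable])
  also have "\<dots> = (if a = b then \<sigma>\<^sup>2 else 0)"
  proof (cases "a = b")
    case True
    have "(\<Prod>i\<in>I. integral\<^sup>L (gauss \<sigma>) (f i)) = (\<Prod>i\<in>I. if i = a then \<sigma>\<^sup>2 else 1)"
      using True gauss_second_moment[OF assms(4)]
      by (intro prod.cong) (auto simp: f_def[abs_def] G.prob_space)
    then show ?thesis using True assms by simp
  next
    case False
    then show ?thesis
      using assms gauss_first_moment[OF assms(4)]
      by (auto simp: f_def[abs_def] intro!: bexI[of _ a])
  qed
  finally show "(\<integral>x. x a * x b \<partial>iid_gauss I \<sigma>) = (if a = b then \<sigma>\<^sup>2 else 0)"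
    unfolding prod_f .
qed

lemma square_affine_expand:
  fixes c :: real
  shows "(c + (\<Sum>j\<in>J. b j * x j))\<^sup>2 =
    c\<^sup>2 + (\<Sum>j\<in>J. (2 * c * b j) * x j) + (\<Sum>j\<in>J. \<Sum>k\<in>J. (b j * b k) * (x j * x k))"
  by (simp add: power2_eq_square algebra_simps sum_distrib_left sum_product)

lemma iid_gauss_affine_square:
  assumes "finite I" "J \<subseteq> I" "\<sigma> > 0"
  shows "integrable (iid_gauss I \<sigma>) (\<lambda>x. (c + (\<Sum>j\<in>J. b j * x j))\<^sup>2)"
    and "(\<integral>x. (c + (\<Sum>j\<in>J. b j * x j))\<^sup>2 \<partial>iid_gauss I \<sigma>) = c\<^sup>2 + \<sigma>\<^sup>2 * (\<Sum>j\<in>J. (b j)\<^sup>2)"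
proof -
  interpret P: prob_space "iid_gauss I \<sigma>" by (rule prob_space_iid_gauss[OF assms(3)])
  have "finite J" using assms finite_subset by blast
  have mean: "integrable (iid_gauss I \<sigma>) (\<lambda>x. x j)" "(\<integral>x. x j \<partial>iid_gauss I \<sigma>) = 0"
    if "j \<in> J" for j
    using iid_gauss_coordinate_mean[OF assms(1) subsetD[OF assms(2) that] assms(3)] by auto
  have cov: "integrable (iid_gauss I \<sigma>) (\<lambda>x. x j * x k)"
      "(\<integral>x. x j * x k \<partial>iid_gauss I \<sigma>) = (if j = k then \<sigma>\<^sup>2 else 0)"
    if "j \<in> J" "k \<in> J" for j k
    using iid_gauss_coordinate_covariance[OF assms(1) subsetD[OF assms(2) that(1)]
        subsetD[OF assms(2) that(2)] assms(3)] by auto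
  have int_linear: "integrable (iid_gauss I \<sigma>) (\<lambda>x. \<Sum>j\<in>J. (2 * c * b j) * x j)"
    using mean by (intro Bochner_Integration.integrable_sum integrable_mult_right) auto
  have int_quadratic: "integrable (iid_gauss I \<sigma>) (\<lambda>x. \<Sum>j\<in>J. \<Sum>k\<in>J. (b j * b k) * (x j * x k))"
    using cov by (intro Bochner_Integration.integrable_sum integrable_mult_right) auto
  show "integrable (iid_gauss I \<sigma>) (\<lambda>x. (c + (\<Sum>j\<in>J. b j * x j))\<^sup>2)"
    unfolding square_affine_expand using int_linear int_quadratic by auto
  have "(\<integral>x. (c + (\<Sum>j\<in>J. b j * x j))\<^sup>2 \<partial>iid_gauss I \<sigma>) =
      c\<^sup>2 + (\<Sum>j\<in>J. (2 * c * b j) * (\<integral>x. x j \<partial>iid_gauss I \<sigma>))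
        + (\<Sum>j\<in>J. \<Sum>k\<in>J. (b j * b k) * (\<integral>x. x j * x k \<partial>iid_gauss I \<sigma>))"
    unfolding square_affine_expand using int_linear int_quadratic mean cov
    by (simp add: P.prob_space Bochner_Integration.integral_sum Bochner_Integration.integrable_sum)
  also have "\<dots> = c\<^sup>2 + (\<Sum>j\<in>J. \<Sum>k\<in>J. (b j * b k) * (if j = k then \<sigma>\<^sup>2 else 0))"
    using mean cov by (simp cong: sum.cong)
  also have "\<dots> = c\<^sup>2 + \<sigma>\<^sup>2 * (\<Sum>j\<in>J. (b j)\<^sup>2)"
    using \<open>finite J\<close>
    by (simp add: if_distrib sum.delta sum_distrib_left power2_eq_square mult_ac cong: if_cong)
  finally show "(\<integral>x. (c + (\<Sum>j\<in>J. b j * x j))\<^sup>2 \<partial>iid_gauss I \<sigma>) = c\<^sup>2 + \<sigma>\<^sup>2 * (\<Sum>j\<in>J. (b j)\<^sup>2)" .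
qed

section \<open>Expected output energy\<close>

lemma sum_singleton_Times: "(\<Sum>j\<in>{m} \<times> A. f j) = (\<Sum>n\<in>A. f (m, n))"
proof -
  have "{m} \<times> A = Pair m ` A" by auto
  then show ?thesis by (simp add: sum.reindex inj_on_def)
qed

lemma device_output_expansion:
  fixes \<Phi> Hq :: "real mat"
  assumes "\<Phi> \<in> carrier_mat R N" "Hq \<in> carrier_mat N K" "m < R"
  shows "row \<Phi> m \<bullet> (Hq *\<^sub>v vec (dim_col Hq) x + vec N (\<lambda>n. w (m, n))) =
     (\<Sum>k<K. (\<Sum>n<N. \<Phi> $$ (m, n) * Hq $$ (n, k)) * x k)
       + (\<Sum>j\<in>{m} \<times> {..<N}. \<Phi> $$ (fst j, snd j) * w j)"
proof -
  have "row \<Phi> m \<bullet> (Hq *\<^sub>v vec (dim_col Hq) x + vec N (\<lambda>n. w (m, n))) =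
     (\<Sum>n<N. \<Phi> $$ (m, n) * ((\<Sum>k<K. Hq $$ (n, k) * x k) + w (m, n)))"
    using assms by (auto simp: atLeast0LessThan scalar_prod_def intro!: sum.cong)
  also have "\<dots> = (\<Sum>n<N. \<Sum>k<K. \<Phi> $$ (m, n) * Hq $$ (n, k) * x k) + (\<Sum>n<N. \<Phi> $$ (m, n) * w (m, n))"
    by (simp add: distrib_left sum.distrib sum_distrib_left mult.assoc)
  also have "(\<Sum>n<N. \<Sum>k<K. \<Phi> $$ (m, n) * Hq $$ (n, k) * x k) =
      (\<Sum>k<K. (\<Sum>n<N. \<Phi> $$ (m, n) * Hq $$ (n, k)) * x k)"
    by (subst sum.swap) (simp add: sum_distrib_right)
  finally show ?thesis by (simp add: sum_singleton_Times)
qed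

lemma integral_out_energy:
  fixes \<Phi> Hq :: "real mat"
  assumes P: "\<Phi> \<in> carrier_mat R N" and Hq: "Hq \<in> carrier_mat N K"
    and "\<sigma>x > 0" "\<sigma>0 > 0"
  shows "(\<integral>x. (\<integral>w. out_energy \<Phi> Hq N x w \<partial>w_law \<sigma>0 R N) \<partial>x_law \<sigma>x K) =
    (\<Sum>m<R. \<sigma>x\<^sup>2 * (\<Sum>k<K. (\<Sum>n<N. \<Phi> $$ (m, n) * Hq $$ (n, k))\<^sup>2) + \<sigma>0\<^sup>2 * (\<Sum>n<N. (\<Phi> $$ (m, n))\<^sup>2))"
proof -
  define c where "c m k = (\<Sum>n<N. \<Phi> $$ (m, n) * Hq $$ (n, k))" for m k
  define s where "s m x = (\<Sum>k\<in>{..<K}. c m k * x k)" for m and x :: "nat \<Rightarrow> real"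
  have energy: "out_energy \<Phi> Hq N x w =
      (\<Sum>m<R. (s m x + (\<Sum>j\<in>{m} \<times> {..<N}. \<Phi> $$ (fst j, snd j) * w j))\<^sup>2)" for x w
    unfolding out_energy_def using P device_output_expansion[OF P Hq] by (simp add: s_def c_def)
  have noise_block: "m < R \<Longrightarrow> {m} \<times> {..<N} \<subseteq> {..<R} \<times> {..<N}" for m by auto
  have noise_integral: "(\<integral>w. out_energy \<Phi> Hq N x w \<partial>w_law \<sigma>0 R N) =
      (\<Sum>m<R. (s m x)\<^sup>2 + \<sigma>0\<^sup>2 * (\<Sum>n<N. (\<Phi> $$ (m, n))\<^sup>2))" for x
    unfolding energy w_law_def
    using iid_gauss_affine_square[OF _ noise_block \<open>\<sigma>0 > 0\<close>]
    by (subst Bochner_Integration.integral_sum) (auto simp: sum_singleton_Times)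
  interpret X: prob_space "iid_gauss {..<K} \<sigma>x" by (rule prob_space_iid_gauss) fact
  have signal: "integrable (iid_gauss {..<K} \<sigma>x) (\<lambda>x. (s m x)\<^sup>2)"
      "(\<integral>x. (s m x)\<^sup>2 \<partial>iid_gauss {..<K} \<sigma>x) = \<sigma>x\<^sup>2 * (\<Sum>k<K. (c m k)\<^sup>2)" for m
    using iid_gauss_affine_square[of "{..<K}" "{..<K}" \<sigma>x 0 "c m"] \<open>\<sigma>x > 0\<close> by (simp_all add: s_def)
  show ?thesis
    unfolding x_law_def noise_integral using signal
    by (simp add: Bochner_Integration.integral_sum Bochner_Integration.integral_add
        X.prob_space c_def)
qed

lemma sum_square_mult_sum:
  fixes p :: "nat \<Rightarrow> real" and h :: "nat \<Rightarrow> nat \<Rightarrow> real"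
  shows "(\<Sum>k<K. (\<Sum>n<N. p n * h n k)\<^sup>2) = (\<Sum>i<N. \<Sum>j<N. p i * (\<Sum>k<K. h i k * h j k) * p j)"
proof -
  have "(\<Sum>k<K. (\<Sum>n<N. p n * h n k)\<^sup>2) = (\<Sum>k<K. \<Sum>i<N. \<Sum>j<N. p i * h i k * (p j * h j k))"
    by (simp add: power2_eq_square sum_product)
  also have "\<dots> = (\<Sum>i<N. \<Sum>j<N. \<Sum>k<K. p i * h i k * (p j * h j k))"
    by (subst sum.swap) (subst (2) sum.swap, rule refl)
  finally show ?thesis
    by (simp add: sum_distrib_left sum_distrib_right mult_ac)
qed

lemma sum_mult_sum_swap:
  fixes a :: "'q \<Rightarrow> real"
  shows "(\<Sum>q\<in>A. a q * (\<Sum>i\<in>B. f q i)) = (\<Sum>i\<in>B. \<Sum>q\<in>A. a q * f q i)"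
  by (simp add: sum_distrib_left) (rule sum.swap)

lemma expected_energy_quadratic_form:
  fixes H :: "nat \<Rightarrow> real mat" and \<Phi> :: "real mat"
  assumes Heq: "Heq = mat N N (\<lambda>(i, j). \<Sum>q<Q. \<pi> q * (H q * transpose_mat (H q)) $$ (i, j))"
    and H_dim: "\<And>q. q < Q \<Longrightarrow> H q \<in> carrier_mat N (K q)"
    and \<pi>_sum: "(\<Sum>q<Q. \<pi> q) = 1"
    and sx: "\<sigma>x > 0" and s0: "\<sigma>0 > 0"
    and P: "\<Phi> \<in> carrier_mat R N"
  shows "expected_energy \<sigma>x \<sigma>0 Q \<pi> H N \<Phi> =
    \<sigma>x\<^sup>2 * (\<Sum>m<R. \<Sum>i<N. \<Sum>j<N. \<Phi> $$ (m, i) * Heq $$ (i, j) * \<Phi> $$ (m, j))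
    + \<sigma>0\<^sup>2 * (\<Sum>m<R. \<Sum>n<N. (\<Phi> $$ (m, n))\<^sup>2)"
proof -
  define S where "S = (\<Sum>m<R. \<Sum>n<N. (\<Phi> $$ (m, n))\<^sup>2)"
  define G where "G q i j = (\<Sum>k<K q. H q $$ (i, k) * H q $$ (j, k))" for q i j
  have dim_H: "dim_col (H q) = K q" if "q < Q" for q using H_dim[OF that] by simp
  have Heq_entry: "Heq $$ (i, j) = (\<Sum>q<Q. \<pi> q * G q i j)" if "i < N" "j < N" for i j
  proof -
    have "(H q * transpose_mat (H q)) $$ (i, j) = G q i j" if "q < Q" for q
      using that \<open>i < N\<close> \<open>j < N\<close> H_dim[OF that]
      by (simp add: G_def scalar_prod_def atLeast0LessThan)
    then show ?thesis using \<open>i < N\<close> \<open>j < N\<close> by (simp add: Heq)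
  qed
  have "expected_energy \<sigma>x \<sigma>0 Q \<pi> H N \<Phi> =
     (\<Sum>q<Q. \<pi> q * (\<Sum>m<R. \<sigma>x\<^sup>2 * (\<Sum>k<K q. (\<Sum>n<N. \<Phi> $$ (m, n) * H q $$ (n, k))\<^sup>2)
        + \<sigma>0\<^sup>2 * (\<Sum>n<N. (\<Phi> $$ (m, n))\<^sup>2)))"
    unfolding expected_energy_def using P integral_out_energy[OF P H_dim sx s0]
    by (intro sum.cong refl) (simp add: dim_H sum.distrib)
  also have "\<dots> = (\<Sum>q<Q. \<pi> q * (\<sigma>x\<^sup>2 * (\<Sum>m<R. \<Sum>i<N. \<Sum>j<N. \<Phi> $$ (m, i) * G q i j * \<Phi> $$ (m, j))
      + \<sigma>0\<^sup>2 * S))"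
    by (simp add: S_def G_def sum.distrib sum_distrib_left sum_square_mult_sum)
  also have "\<dots> = \<sigma>x\<^sup>2 * (\<Sum>q<Q. \<pi> q * (\<Sum>m<R. \<Sum>i<N. \<Sum>j<N. \<Phi> $$ (m, i) * G q i j * \<Phi> $$ (m, j)))
       + \<sigma>0\<^sup>2 * S * (\<Sum>q<Q. \<pi> q)"
    by (simp add: algebra_simps sum.distrib sum_distrib_left sum_distrib_right)
  also have "(\<Sum>q<Q. \<pi> q * (\<Sum>m<R. \<Sum>i<N. \<Sum>j<N. \<Phi> $$ (m, i) * G q i j * \<Phi> $$ (m, j)))
     = (\<Sum>m<R. \<Sum>i<N. \<Sum>j<N. \<Sum>q<Q. \<pi> q * (\<Phi> $$ (m, i) * G q i j * \<Phi> $$ (m, j)))"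
    by (simp only: sum_mult_sum_swap)
  also have "\<dots> = (\<Sum>m<R. \<Sum>i<N. \<Sum>j<N. \<Phi> $$ (m, i) * Heq $$ (i, j) * \<Phi> $$ (m, j))"
    by (intro sum.cong refl) (simp add: Heq_entry sum_distrib_left sum_distrib_right mult_ac)
  finally show ?thesis using \<pi>_sum by (simp add: S_def)
qed

text \<open>Here \<open>E l n\<close> is the \<open>n\<close>-th coordinate of the \<open>l\<close>-th basis vector; completeness is stated
  as orthonormality of the columns of the matrix \<open>E\<close>.\<close>

lemma orthonormal_expansion:
  fixes p :: "nat \<Rightarrow> real" and E :: "nat \<Rightarrow> nat \<Rightarrow> real"
  assumes complete: "\<And>i n. i < N \<Longrightarrow> n < N \<Longrightarrow> (\<Sum>l<N. E l i * E l n) = (if i = n then 1 else 0)"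
    and "i < N"
  shows "(\<Sum>l<N. (\<Sum>n<N. p n * E l n) * E l i) = p i"
proof -
  have "(\<Sum>l<N. (\<Sum>n<N. p n * E l n) * E l i) = (\<Sum>n<N. p n * (\<Sum>l<N. E l n * E l i))"
    by (simp add: sum_distrib_left sum_distrib_right mult.assoc) (rule sum.swap)
  also have "\<dots> = (\<Sum>n<N. p n * (if n = i then 1 else 0))"
    using complete \<open>i < N\<close> by (intro sum.cong refl) auto
  also have "\<dots> = p i" using \<open>i < N\<close> by (simp add: if_distrib sum.delta cong: if_cong)
  finally show ?thesis .
qed

lemma parseval_identity:
  fixes p :: "nat \<Rightarrow> real" and E :: "nat \<Rightarrow> nat \<Rightarrow> real"
  assumes complete: "\<And>i n. i < N \<Longrightarrow> n < N \<Longrightarrow> (\<Sum>l<N. E l i * E l n) = (if i = n then 1 else 0)"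
  shows "(\<Sum>l<N. (\<Sum>n<N. p n * E l n)\<^sup>2) = (\<Sum>n<N. (p n)\<^sup>2)"
proof -
  have "(\<Sum>l<N. (\<Sum>n<N. p n * E l n)\<^sup>2) = (\<Sum>n<N. p n * (\<Sum>l<N. (\<Sum>n<N. p n * E l n) * E l n))"
    by (simp add: power2_eq_square sum_distrib_left sum_distrib_right mult_ac) (rule sum.swap)
  also have "\<dots> = (\<Sum>n<N. p n * p n)"
    using orthonormal_expansion[OF complete] by (intro sum.cong refl) auto
  finally show ?thesis by (simp add: power2_eq_square)
qed

lemma quadratic_form_eigen_expansion:
  fixes p :: "nat \<Rightarrow> real" and E A :: "nat \<Rightarrow> nat \<Rightarrow> real"
  assumes complete: "\<And>i n. i < N \<Longrightarrow> n < N \<Longrightarrow> (\<Sum>l<N. E l i * E l n) = (if i = n then 1 else 0)"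
    and eigen: "\<And>l i. l < N \<Longrightarrow> i < N \<Longrightarrow> (\<Sum>j<N. A i j * E l j) = \<mu> l * E l i"
  shows "(\<Sum>i<N. \<Sum>j<N. p i * A i j * p j) = (\<Sum>l<N. \<mu> l * (\<Sum>n<N. p n * E l n)\<^sup>2)"
proof -
  define c where "c l = (\<Sum>n<N. p n * E l n)" for l
  have A_p: "(\<Sum>j<N. A i j * p j) = (\<Sum>l<N. c l * (\<mu> l * E l i))" if "i < N" for i
  proof -
    have "(\<Sum>j<N. A i j * p j) = (\<Sum>j<N. A i j * (\<Sum>l<N. c l * E l j))"
      using orthonormal_expansion[OF complete] unfolding c_def by (intro sum.cong refl) auto
    also have "\<dots> = (\<Sum>l<N. c l * (\<Sum>j<N. A i j * E l j))"
      by (simp add: sum_distrib_left mult_ac) (rule sum.swap)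
    finally show ?thesis using eigen that by simp
  qed
  have "(\<Sum>i<N. \<Sum>j<N. p i * A i j * p j) = (\<Sum>i<N. p i * (\<Sum>l<N. c l * (\<mu> l * E l i)))"
    by (simp add: sum_distrib_left mult.assoc flip: A_p)
  also have "\<dots> = (\<Sum>l<N. c l * \<mu> l * (\<Sum>i<N. p i * E l i))"
    by (simp add: sum_distrib_left mult_ac) (rule sum.swap)
  finally show ?thesis by (simp add: c_def power2_eq_square mult_ac)
qed

lemma bessel_inequality:
  fixes u :: "nat \<Rightarrow> nat \<Rightarrow> real" and v :: "nat \<Rightarrow> real"
  assumes orth: "\<And>m m'. m < R \<Longrightarrow> m' < R \<Longrightarrow> (\<Sum>n<N. u m n * u m' n) = (if m = m' then 1 else 0)"
  shows "(\<Sum>m<R. (\<Sum>n<N. u m n * v n)\<^sup>2) \<le> (\<Sum>n<N. (v n)\<^sup>2)"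
proof -
  define g where "g m = (\<Sum>n<N. u m n * v n)" for m
  define p where "p n = (\<Sum>m<R. g m * u m n)" for n
  have v_p: "(\<Sum>n<N. v n * p n) = (\<Sum>m<R. (g m)\<^sup>2)"
    by (simp add: p_def g_def sum_distrib_left sum_distrib_right power2_eq_square mult_ac)
      (rule sum.swap)
  have p_u: "(\<Sum>n<N. p n * u m n) = g m" if "m < R" for m
  proof -
    have "(\<Sum>n<N. p n * u m n) = (\<Sum>m'<R. g m' * (\<Sum>n<N. u m' n * u m n))"
      by (simp add: p_def sum_distrib_left sum_distrib_right mult.assoc) (rule sum.swap)
    also have "\<dots> = (\<Sum>m'<R. g m' * (if m' = m then 1 else 0))"
      using orth that by (intro sum.cong refl) auto
    finally show ?thesis using that by (simp add: if_distrib sum.delta cong: if_cong)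
  qed
  have p_p: "(\<Sum>n<N. (p n)\<^sup>2) = (\<Sum>m<R. (g m)\<^sup>2)"
  proof -
    have "(\<Sum>n<N. (p n)\<^sup>2) = (\<Sum>m<R. g m * (\<Sum>n<N. p n * u m n))"
      by (simp add: power2_eq_square p_def[of n for n] sum_distrib_left mult_ac) (rule sum.swap)
    then show ?thesis using p_u by (simp add: power2_eq_square)
  qed
  \<comment> \<open>\<open>p\<close> is the orthogonal projection of \<open>v\<close> onto the span of the \<open>u m\<close>.\<close>
  have "0 \<le> (\<Sum>n<N. (v n - p n)\<^sup>2)" by (intro sum_nonneg) auto
  also have "\<dots> = (\<Sum>n<N. (v n)\<^sup>2) - 2 * (\<Sum>n<N. v n * p n) + (\<Sum>n<N. (p n)\<^sup>2)"
    by (simp add: power2_diff sum.distrib sum_subtractf sum_distrib_left mult_ac)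
  finally show ?thesis using v_p p_p by (simp add: g_def)
qed

section \<open>Extremal weightings of a decreasing sequence\<close>

text \<open>Subtracting the threshold \<open>t = \<mu> (R - 1)\<close> changes every admissible weighting by the
  same amount \<open>t R B\<close>; afterwards the coefficients of the indices below \<open>R\<close> are nonnegative and
  all others nonpositive, so weight \<open>B\<close> below \<open>R\<close> and \<open>0\<close> above is optimal.\<close>

lemma weighted_sum_le_top:
  fixes \<mu> d :: "nat \<Rightarrow> real"
  assumes R: "0 < R" "R \<le> N"
    and d: "\<And>l. l < N \<Longrightarrow> 0 \<le> d l \<and> d l \<le> B"
    and d_sum: "(\<Sum>l<N. d l) = R * B"
    and mono: "\<And>i j. i \<le> j \<Longrightarrow> j < N \<Longrightarrow> \<mu> j \<le> \<mu> i"
  shows "(\<Sum>l<N. \<mu> l * d l) \<le> B * (\<Sum>l<R. \<mu> l)"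
proof -
  define t where "t = \<mu> (R - 1)"
  have "(\<Sum>l<N. \<mu> l * d l) = (\<Sum>l<N. (\<mu> l - t) * d l) + t * (R * B)"
    using d_sum by (simp add: algebra_simps sum_subtractf flip: sum_distrib_left)
  also have "(\<Sum>l<N. (\<mu> l - t) * d l) \<le> (\<Sum>l<N. if l < R then (\<mu> l - t) * B else 0)"
  proof (rule sum_mono)
    fix l assume l: "l \<in> {..<N}"
    show "(\<mu> l - t) * d l \<le> (if l < R then (\<mu> l - t) * B else 0)"
    proof (cases "l < R")
      case True
      then have "\<mu> l - t \<ge> 0" using mono[of l "R - 1"] R unfolding t_def by auto
      then show ?thesis using True d[of l] l by (auto intro: mult_left_mono)
    next
      case False
      then have "\<mu> l - t \<le> 0" using mono[of "R - 1" l] R l unfolding t_def by auto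
      then show ?thesis using False d[of l] l by (auto intro: mult_nonpos_nonneg)
    qed
  qed
  also have "(\<Sum>l<N. if l < R then (\<mu> l - t) * B else 0) = (\<Sum>l<R. (\<mu> l - t) * B)"
    using R by (simp add: sum.If_cases) (intro sum.cong; auto)
  finally show ?thesis by (simp add: algebra_simps sum_subtractf sum_distrib_left sum_distrib_right)
qed

lemma weighted_sum_ge_bottom:
  fixes \<mu> d :: "nat \<Rightarrow> real"
  assumes R: "0 < R" "R \<le> N"
    and d: "\<And>l. l < N \<Longrightarrow> 0 \<le> d l \<and> d l \<le> B"
    and d_sum: "(\<Sum>l<N. d l) = R * B"
    and mono: "\<And>i j. i \<le> j \<Longrightarrow> j < N \<Longrightarrow> \<mu> j \<le> \<mu> i"
  shows "B * (\<Sum>l\<in>{N-R..<N}. \<mu> l) \<le> (\<Sum>l<N. \<mu> l * d l)"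
proof -
  \<comment> \<open>Reverse the order of the indices and negate \<open>\<mu>\<close>.\<close>
  have rev: "(\<Sum>l<N. f (N - Suc l)) = (\<Sum>l<N. f l)" for f :: "nat \<Rightarrow> real"
    by (rule sum.reindex_bij_witness[where i="\<lambda>l. N - Suc l" and j="\<lambda>l. N - Suc l"]) auto
  have rev_top: "(\<Sum>l<R. \<mu> (N - Suc l)) = (\<Sum>l\<in>{N-R..<N}. \<mu> l)"
    using R by (intro sum.reindex_bij_witness[where i="\<lambda>l. N - Suc l" and j="\<lambda>l. N - Suc l"]) auto
  have "(\<Sum>l<N. - \<mu> (N - Suc l) * d (N - Suc l)) \<le> B * (\<Sum>l<R. - \<mu> (N - Suc l))"
    using R d d_sum mono by (intro weighted_sum_le_top) (auto simp: rev)
  then show ?thesis using rev[of "\<lambda>l. \<mu> l * d l"] by (simp add: rev_top sum_negf)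
qed

section \<open>Spectral weights of a measurement matrix\<close>

definition spectral_weight :: "real mat \<Rightarrow> real vec \<Rightarrow> real" where
  "spectral_weight \<Phi> v = (\<Sum>m<dim_row \<Phi>. (\<Sum>n<dim_col \<Phi>. \<Phi> $$ (m, n) * v $ n)\<^sup>2)"

lemma scaled_orthogonal_rows:
  fixes \<Phi> :: "real mat"
  assumes "\<Phi> \<in> carrier_mat R N" and "real M \<cdot>\<^sub>m (\<Phi> * transpose_mat \<Phi>) = 1\<^sub>m R"
    and "M > 0" "m < R" "m' < R"
  shows "(\<Sum>n<N. \<Phi> $$ (m, n) * \<Phi> $$ (m', n)) = (if m = m' then 1 / real M else 0)"
proof -
  have "(real M \<cdot>\<^sub>m (\<Phi> * transpose_mat \<Phi>)) $$ (m, m') = real M * (\<Sum>n<N. \<Phi> $$ (m, n) * \<Phi> $$ (m', n))"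
    using assms(1,4,5) by (simp add: scalar_prod_def atLeast0LessThan)
  then have "real M * (\<Sum>n<N. \<Phi> $$ (m, n) * \<Phi> $$ (m', n)) = (if m = m' then 1 else 0)"
    using assms by simp
  then show ?thesis using \<open>M > 0\<close> by (auto simp: field_simps)
qed

lemma spectral_weight_le:
  fixes \<Phi> :: "real mat" and v :: "real vec"
  assumes P: "\<Phi> \<in> carrier_mat R N" and orth: "real M \<cdot>\<^sub>m (\<Phi> * transpose_mat \<Phi>) = 1\<^sub>m R"
    and "M > 0" and unit: "(\<Sum>n<N. (v $ n)\<^sup>2) = 1"
  shows "spectral_weight \<Phi> v \<le> 1 / M"
proof -
  define u where "u m n = sqrt M * \<Phi> $$ (m, n)" for m n
  have u_orth: "(\<Sum>n<N. u m n * u m' n) = (if m = m' then 1 else 0)" if "m < R" "m' < R" for m m'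
  proof -
    have "u m n * u m' n = sqrt M * sqrt M * (\<Phi> $$ (m, n) * \<Phi> $$ (m', n))" for n
      unfolding u_def by (simp only: ac_simps)
    then have "(\<Sum>n<N. u m n * u m' n) = M * (\<Sum>n<N. \<Phi> $$ (m, n) * \<Phi> $$ (m', n))"
      by (simp add: sum_distrib_left)
    then show ?thesis using scaled_orthogonal_rows[OF P orth \<open>M > 0\<close> that] \<open>M > 0\<close> by simp
  qed
  have u_v: "(\<Sum>n<N. u m n * v $ n)\<^sup>2 = M * (\<Sum>n<N. \<Phi> $$ (m, n) * v $ n)\<^sup>2" for m
  proof -
    have "(\<Sum>n<N. u m n * v $ n) = sqrt M * (\<Sum>n<N. \<Phi> $$ (m, n) * v $ n)"
      by (simp add: u_def sum_distrib_left mult.assoc)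
    then show ?thesis by (simp add: power_mult_distrib)
  qed
  have "M * spectral_weight \<Phi> v = (\<Sum>m<R. (\<Sum>n<N. u m n * v $ n)\<^sup>2)"
    using P by (simp add: spectral_weight_def u_v sum_distrib_left)
  also have "\<dots> \<le> 1"
    using bessel_inequality[where u=u and v="\<lambda>n. v $ n", OF u_orth] unit by simp
  finally show ?thesis using \<open>M > 0\<close> by (simp add: field_simps)
qed

locale eigen_model =
  fixes Q N :: nat and K :: "nat \<Rightarrow> nat" and H :: "nat \<Rightarrow> real mat" and \<pi> :: "nat \<Rightarrow> real"
    and \<sigma>x \<sigma>0 :: real and e :: "nat \<Rightarrow> real vec" and \<mu> :: "nat \<Rightarrow> real" and Heq :: "real mat"
  assumes Heq_eq: "Heq = mat N N (\<lambda>(i, j). \<Sum>q<Q. \<pi> q * (H q * transpose_mat (H q)) $$ (i, j))"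
    and H_dim: "\<And>q. q < Q \<Longrightarrow> H q \<in> carrier_mat N (K q)"
    and \<pi>_sum: "(\<Sum>q<Q. \<pi> q) = 1"
    and \<sigma>x_pos: "\<sigma>x > 0" and \<sigma>0_pos: "\<sigma>0 > 0"
    and e_dim: "\<And>i. i < N \<Longrightarrow> e i \<in> carrier_vec N"
    and e_orthonormal: "\<And>i j. i < N \<Longrightarrow> j < N \<Longrightarrow> e i \<bullet> e j = (if i = j then 1 else 0)"
    and e_eigen: "\<And>i. i < N \<Longrightarrow> Heq *\<^sub>v e i = \<mu> i \<cdot>\<^sub>v e i"
begin

lemma e_inner: "l < N \<Longrightarrow> l' < N \<Longrightarrow> (\<Sum>n<N. e l $ n * e l' $ n) = (if l = l' then 1 else 0)"
  using e_orthonormal[of l l'] e_dim[of l'] by (simp add: scalar_prod_def atLeast0LessThan)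

text \<open>A square matrix with orthonormal rows also has orthonormal columns.\<close>

lemma e_complete:
  assumes "i < N" "n < N"
  shows "(\<Sum>l<N. e l $ i * e l $ n) = (if i = n then 1 else 0)"
proof -
  define E where "E = mat N N (\<lambda>(l, n). e l $ n)"
  have "E * transpose_mat E = 1\<^sub>m N"
    by (rule eq_matI) (auto simp: E_def scalar_prod_def atLeast0LessThan e_inner)
  then have "transpose_mat E * E = 1\<^sub>m N"
    by (rule mat_mult_left_right_inverse[rotated 2]) (simp_all add: E_def)
  moreover have "(transpose_mat E * E) $$ (i, n) = (\<Sum>l<N. e l $ i * e l $ n)"
    using assms by (simp add: E_def scalar_prod_def atLeast0LessThan)
  ultimately show ?thesis using assms by simp
qed

lemma e_eigen_entry:
  assumes "l < N" "i < N"
  shows "(\<Sum>j<N. Heq $$ (i, j) * e l $ j) = \<mu> l * e l $ i"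
proof -
  have "(Heq *\<^sub>v e l) $ i = (\<Sum>j<N. Heq $$ (i, j) * e l $ j)"
    using assms e_dim[of l] by (simp add: Heq_eq scalar_prod_def atLeast0LessThan)
  then show ?thesis using e_eigen[of l] e_dim[of l] assms by simp
qed

lemma expected_energy_spectral:
  assumes P: "\<Phi> \<in> carrier_mat R N" and orth: "real M \<cdot>\<^sub>m (\<Phi> * transpose_mat \<Phi>) = 1\<^sub>m R"
    and "M > 0"
  shows "expected_energy \<sigma>x \<sigma>0 Q \<pi> H N \<Phi> =
    \<sigma>x\<^sup>2 * (\<Sum>l<N. \<mu> l * spectral_weight \<Phi> (e l)) + \<sigma>0\<^sup>2 * (R / M)"
proof -
  have noise: "(\<Sum>m<R. \<Sum>n<N. (\<Phi> $$ (m, n))\<^sup>2) = R / M"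
    using scaled_orthogonal_rows[OF P orth \<open>M > 0\<close>] by (simp add: power2_eq_square)
  have "(\<Sum>m<R. \<Sum>i<N. \<Sum>j<N. \<Phi> $$ (m, i) * Heq $$ (i, j) * \<Phi> $$ (m, j)) =
      (\<Sum>m<R. \<Sum>l<N. \<mu> l * (\<Sum>n<N. \<Phi> $$ (m, n) * e l $ n)\<^sup>2)"
    using e_complete e_eigen_entry
    by (intro sum.cong refl quadratic_form_eigen_expansion[where E="\<lambda>l n. e l $ n"]) auto
  also have "\<dots> = (\<Sum>l<N. \<mu> l * spectral_weight \<Phi> (e l))"
    using P by (simp add: spectral_weight_def sum_distrib_left) (rule sum.swap)
  finally show ?thesis
    using expected_energy_quadratic_form[OF Heq_eq H_dim \<pi>_sum \<sigma>x_pos \<sigma>0_pos P] noise by simp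
qed

lemma spectral_weight_bounds:
  assumes "\<Phi> \<in> carrier_mat R N" "real M \<cdot>\<^sub>m (\<Phi> * transpose_mat \<Phi>) = 1\<^sub>m R" "M > 0" "l < N"
  shows "0 \<le> spectral_weight \<Phi> (e l) \<and> spectral_weight \<Phi> (e l) \<le> 1 / M"
  using spectral_weight_le[OF assms(1-3)] e_inner[of l l] assms(4)
  by (auto simp: spectral_weight_def power2_eq_square intro: sum_nonneg)

lemma sum_spectral_weights:
  assumes P: "\<Phi> \<in> carrier_mat R N" and orth: "real M \<cdot>\<^sub>m (\<Phi> * transpose_mat \<Phi>) = 1\<^sub>m R"
    and "M > 0"
  shows "(\<Sum>l<N. spectral_weight \<Phi> (e l)) = R * (1 / M)"
proof -
  have "(\<Sum>l<N. spectral_weight \<Phi> (e l)) = (\<Sum>m<R. \<Sum>l<N. (\<Sum>n<N. \<Phi> $$ (m, n) * e l $ n)\<^sup>2)"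
    using P by (simp add: spectral_weight_def) (rule sum.swap)
  also have "\<dots> = (\<Sum>m<R. \<Sum>n<N. (\<Phi> $$ (m, n))\<^sup>2)"
    using e_complete by (intro sum.cong refl parseval_identity[where E="\<lambda>l n. e l $ n"]) auto
  also have "\<dots> = R * (1 / M)"
    using scaled_orthogonal_rows[OF P orth \<open>M > 0\<close>] by (simp add: power2_eq_square)
  finally show ?thesis .
qed

lemma expected_energy_le_top:
  assumes "\<Phi> \<in> carrier_mat R N" "real M \<cdot>\<^sub>m (\<Phi> * transpose_mat \<Phi>) = 1\<^sub>m R" "M > 0"
    and "0 < R" "R \<le> N" and mono: "\<And>i j. i \<le> j \<Longrightarrow> j < N \<Longrightarrow> \<mu> j \<le> \<mu> i"
  shows "expected_energy \<sigma>x \<sigma>0 Q \<pi> H N \<Phi> \<le> \<sigma>x\<^sup>2 * (1 / M * (\<Sum>l<R. \<mu> l)) + \<sigma>0\<^sup>2 * (R / M)"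
proof -
  have "(\<Sum>l<N. \<mu> l * spectral_weight \<Phi> (e l)) \<le> 1 / M * (\<Sum>l<R. \<mu> l)" (is "?lhs \<le> ?rhs")
    using assms spectral_weight_bounds sum_spectral_weights by (intro weighted_sum_le_top) auto
  then have "\<sigma>x\<^sup>2 * ?lhs \<le> \<sigma>x\<^sup>2 * ?rhs" by (rule mult_left_mono) simp
  then show ?thesis using expected_energy_spectral[OF assms(1-3)] by simp
qed

lemma expected_energy_ge_bottom:
  assumes "\<Phi> \<in> carrier_mat R N" "real M \<cdot>\<^sub>m (\<Phi> * transpose_mat \<Phi>) = 1\<^sub>m R" "M > 0"
    and "0 < R" "R \<le> N" and mono: "\<And>i j. i \<le> j \<Longrightarrow> j < N \<Longrightarrow> \<mu> j \<le> \<mu> i"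
  shows "\<sigma>x\<^sup>2 * (1 / M * (\<Sum>l\<in>{N-R..<N}. \<mu> l)) + \<sigma>0\<^sup>2 * (R / M) \<le> expected_energy \<sigma>x \<sigma>0 Q \<pi> H N \<Phi>"
proof -
  have "1 / M * (\<Sum>l\<in>{N-R..<N}. \<mu> l) \<le> (\<Sum>l<N. \<mu> l * spectral_weight \<Phi> (e l))"
    (is "?lhs \<le> ?rhs")
    using assms spectral_weight_bounds sum_spectral_weights by (intro weighted_sum_ge_bottom) auto
  then have "\<sigma>x\<^sup>2 * ?lhs \<le> \<sigma>x\<^sup>2 * ?rhs" by (rule mult_left_mono) simp
  then show ?thesis using expected_energy_spectral[OF assms(1-3)] by simp
qed

lemma eigen_design:
  fixes f :: "nat \<Rightarrow> nat"
  assumes f: "\<And>m. m < R \<Longrightarrow> f m < N" and inj: "inj_on f {..<R}" and "M > 0"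
    and \<Phi>: "\<Phi> = (1 / sqrt (real M)) \<cdot>\<^sub>m mat R N (\<lambda>(i, n). e (f i) $ n)"
  shows "\<Phi> \<in> carrier_mat R N"
    and "real M \<cdot>\<^sub>m (\<Phi> * transpose_mat \<Phi>) = 1\<^sub>m R"
    and "expected_energy \<sigma>x \<sigma>0 Q \<pi> H N \<Phi> = \<sigma>x\<^sup>2 * (1 / M * (\<Sum>m<R. \<mu> (f m))) + \<sigma>0\<^sup>2 * (R / M)"
proof -
  show P: "\<Phi> \<in> carrier_mat R N" unfolding \<Phi> by simp
  have entry: "\<Phi> $$ (m, n) = 1 / sqrt M * e (f m) $ n" if "m < R" "n < N" for m n
    using that unfolding \<Phi> by simp
  have row_coeff: "(\<Sum>n<N. \<Phi> $$ (m, n) * e l $ n) = (if f m = l then 1 / sqrt M else 0)"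
    if "m < R" "l < N" for m l
  proof -
    have "(\<Sum>n<N. \<Phi> $$ (m, n) * e l $ n) = 1 / sqrt M * (\<Sum>n<N. e (f m) $ n * e l $ n)"
      using that by (simp add: entry sum_distrib_left mult_ac)
    then show ?thesis using e_inner[of "f m" l] f that by simp
  qed
  show orth: "real M \<cdot>\<^sub>m (\<Phi> * transpose_mat \<Phi>) = 1\<^sub>m R"
  proof (rule eq_matI)
    fix i j assume "i < dim_row (1\<^sub>m R)" "j < dim_col (1\<^sub>m R)"
    then have "i < R" "j < R" by simp_all
    then have "(real M \<cdot>\<^sub>m (\<Phi> * transpose_mat \<Phi>)) $$ (i, j) = real M * (\<Sum>n<N. \<Phi> $$ (i, n) * \<Phi> $$ (j, n))"
      using P by (simp add: scalar_prod_def atLeast0LessThan)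
    also have "\<dots> = real M * (1 / sqrt M * (\<Sum>n<N. \<Phi> $$ (i, n) * e (f j) $ n))"
      using \<open>j < R\<close> by (simp add: entry sum_distrib_left mult_ac)
    also have "\<dots> = (if i = j then 1 else 0)"
      using row_coeff[of i "f j"] f \<open>i < R\<close> \<open>j < R\<close> inj_onD[OF inj, of i j] \<open>M > 0\<close> by auto
    finally show "(real M \<cdot>\<^sub>m (\<Phi> * transpose_mat \<Phi>)) $$ (i, j) = 1\<^sub>m R $$ (i, j)"
      using \<open>i < R\<close> \<open>j < R\<close> by simp
  qed (simp_all add: \<Phi>)
  have "(\<Sum>l<N. \<mu> l * spectral_weight \<Phi> (e l)) = (\<Sum>m<R. \<Sum>l<N. \<mu> l * (if f m = l then 1 / M else 0))"
  proof -
    have "(if b then 1 / sqrt M else 0)\<^sup>2 = (if b then 1 / M else 0)" for b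
      using \<open>M > 0\<close> by (simp add: power_divide)
    then show ?thesis
      using P row_coeff by (simp add: spectral_weight_def sum_distrib_left) (rule sum.swap)
  qed
  also have "\<dots> = 1 / M * (\<Sum>m<R. \<mu> (f m))"
    using f by (simp add: if_distrib sum.delta' sum_distrib_left cong: if_cong)
  finally show "expected_energy \<sigma>x \<sigma>0 Q \<pi> H N \<Phi> = \<sigma>x\<^sup>2 * (1 / M * (\<Sum>m<R. \<mu> (f m))) + \<sigma>0\<^sup>2 * (R / M)"
    using expected_energy_spectral[OF P orth \<open>M > 0\<close>] by simp
qed

end

theorem theorem5:
  fixes Q N M1 M2 :: nat
    and K :: "nat \<Rightarrow> nat"
    and H :: "nat \<Rightarrow> real mat"
    and \<pi> :: "nat \<Rightarrow> real"
    and \<sigma>x \<sigma>0 :: real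
    and e :: "nat \<Rightarrow> real vec"
    and \<mu> :: "nat \<Rightarrow> real"
  defines "Heq \<equiv> mat N N (\<lambda>(i, j). \<Sum>q<Q. \<pi> q * (H q * transpose_mat (H q)) $$ (i, j))"
  defines "M \<equiv> M1 + M2"
  defines "\<Phi>s \<equiv> (1 / sqrt (real M)) \<cdot>\<^sub>m mat M1 N (\<lambda>(i, n). e i $ n)"
  defines "\<Phi>o \<equiv> (1 / sqrt (real M)) \<cdot>\<^sub>m mat M2 N (\<lambda>(i, n). e (N - M2 + i) $ n)"
  assumes H_dim: "\<And>q. q < Q \<Longrightarrow> H q \<in> carrier_mat N (K q)"
    and H_rank: "\<And>q. q < Q \<Longrightarrow> full_col_rank (H q)"
    and \<pi>_nonneg: "\<And>q. q < Q \<Longrightarrow> \<pi> q \<ge> 0"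
    and \<pi>_sum: "(\<Sum>q<Q. \<pi> q) = 1"
    and \<sigma>x_pos: "\<sigma>x > 0" and \<sigma>0_pos: "\<sigma>0 > 0"
    and e_dim: "\<And>i. i < N \<Longrightarrow> e i \<in> carrier_vec N"
    and e_orthonormal: "\<And>i j. i < N \<Longrightarrow> j < N \<Longrightarrow> e i \<bullet> e j = (if i = j then 1 else 0)"
    and e_eigen: "\<And>i. i < N \<Longrightarrow> Heq *\<^sub>v e i = \<mu> i \<cdot>\<^sub>v e i"
    and \<mu>_sorted: "\<And>i j. i \<le> j \<Longrightarrow> j < N \<Longrightarrow> \<mu> j \<le> \<mu> i"
    and M1_pos: "M1 > 0" and M2_pos: "M2 > 0"
    and M_le: "M \<le> N"
  shows "\<Phi>s \<in> carrier_mat M1 N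
         \<and> real M \<cdot>\<^sub>m (\<Phi>s * transpose_mat \<Phi>s) = 1\<^sub>m M1
         \<and> (\<forall>\<Phi> \<in> carrier_mat M1 N. real M \<cdot>\<^sub>m (\<Phi> * transpose_mat \<Phi>) = 1\<^sub>m M1 \<longrightarrow>
               expected_energy \<sigma>x \<sigma>0 Q \<pi> H N \<Phi> \<le> expected_energy \<sigma>x \<sigma>0 Q \<pi> H N \<Phi>s)
         \<and> \<Phi>o \<in> carrier_mat M2 N
         \<and> real M \<cdot>\<^sub>m (\<Phi>o * transpose_mat \<Phi>o) = 1\<^sub>m M2
         \<and> (\<forall>\<Phi> \<in> carrier_mat M2 N. real M \<cdot>\<^sub>m (\<Phi> * transpose_mat \<Phi>) = 1\<^sub>m M2 \<longrightarrow>
               expected_energy \<sigma>x \<sigma>0 Q \<pi> H N \<Phi>o \<le> expected_energy \<sigma>x \<sigma>0 Q \<pi> H N \<Phi>)"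
proof -
  interpret eigen_model Q N K H \<pi> \<sigma>x \<sigma>0 e \<mu> Heq
    by unfold_locales
      (fact Heq_def[THEN meta_eq_to_obj_eq] H_dim \<pi>_sum \<sigma>x_pos \<sigma>0_pos e_dim e_orthonormal e_eigen)+
  have "M > 0" "M1 \<le> N" "M2 \<le> N" using M1_pos M_le by (auto simp: M_def)
  have top_design: "\<Phi>s \<in> carrier_mat M1 N" "real M \<cdot>\<^sub>m (\<Phi>s * transpose_mat \<Phi>s) = 1\<^sub>m M1"
    "expected_energy \<sigma>x \<sigma>0 Q \<pi> H N \<Phi>s = \<sigma>x\<^sup>2 * (1 / M * (\<Sum>l<M1. \<mu> l)) + \<sigma>0\<^sup>2 * (M1 / M)"
    using eigen_design[of M1 "\<lambda>i. i" M \<Phi>s, OF _ _ \<open>M > 0\<close> \<Phi>s_def[THEN meta_eq_to_obj_eq]] \<open>M1 \<le> N\<close>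
    by auto
  have "(\<Sum>m<M2. \<mu> (N - M2 + m)) = (\<Sum>l\<in>{N-M2..<N}. \<mu> l)"
    using \<open>M2 \<le> N\<close>
    by (intro sum.reindex_bij_witness[where i="\<lambda>l. l - (N - M2)" and j="\<lambda>m. N - M2 + m"]) auto
  moreover have "(\<And>m. m < M2 \<Longrightarrow> N - M2 + m < N)" "inj_on (\<lambda>m. N - M2 + m) {..<M2}"
    using \<open>M2 \<le> N\<close> by (auto simp: inj_on_def)
  ultimately have bottom_design: "\<Phi>o \<in> carrier_mat M2 N" "real M \<cdot>\<^sub>m (\<Phi>o * transpose_mat \<Phi>o) = 1\<^sub>m M2"
    "expected_energy \<sigma>x \<sigma>0 Q \<pi> H N \<Phi>o
       = \<sigma>x\<^sup>2 * (1 / M * (\<Sum>l\<in>{N-M2..<N}. \<mu> l)) + \<sigma>0\<^sup>2 * (M2 / M)"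
    using eigen_design[of M2 "\<lambda>i. N - M2 + i" M \<Phi>o, OF _ _ \<open>M > 0\<close> \<Phi>o_def[THEN meta_eq_to_obj_eq]]
    by auto
  show ?thesis
    using top_design bottom_design
      expected_energy_le_top[OF _ _ \<open>M > 0\<close> M1_pos \<open>M1 \<le> N\<close> \<mu>_sorted]
      expected_energy_ge_bottom[OF _ _ \<open>M > 0\<close> M2_pos \<open>M2 \<le> N\<close> \<mu>_sorted]
    by auto
qed

end
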